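(* Let $\mathbb{V}$ and $\mathbb{V}'$ be varieties with the same signature $\mathcal{F}$ and defining sets of identities $\Sigma\subseteq\Sigma'$ respectively, and suppose $\mathbb{V}$ is BIT speciale. Let $A'$ be a $\mathbb{V}'$-algebra. A subset $H\subseteq A'$ is an ideal of $A'$ in the variety $\mathbb{V}'$ if and only if it is an ideal of $A'$ in the variety $\mathbb{V}$.
   Context: BIT speciale: the algebraic theory of $\mathbb{V}$ contains a constant $0$ and, for some $n\ge1$, binary terms $\alpha_1,\dots,\alpha_n$ and an $(n+1)$-ary term $\theta$ such that $\alpha_i(x,x)=0$ and $\theta(\alpha_1(x,y),\dots,\alpha_n(x,y),y)=x$ are identities of $\mathbb{V}$. For a variety $\mathbb{W}$ with signature $\mathcal{F}$: an ideal term of $\mathbb{W}$ in the variables $y_1,\dots,y_p$ is a term $t(x_1,\dots,x_m,y_1,\dots,y_p)$ over $\mathcal{F}$ such that $t(x_1,\dots,x_m,0,\dots,0)=0$ is an identity of $\mathbb{W}$; a non-empty subset $H$ of a $\mathbb{W}$-algebra $A$ is an ideal of $A$ in $\mathbb{W}$ if $t(a_1,\dots,a_m,b_1,\dots,b_p)\in H$ for every ideal term $t$ of $\mathbb{W}$, all $a_r\in A$ and all $b_s\in H$. A $\mathbb{V}'$-algebra is in particular a $\mathbb{V}$-algebra. *)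

theory Defs
  imports Main
begin

datatype 'f trm = Var nat | Op 'f "'f trm list"

fun wf_trm :: "('f \<Rightarrow> nat) \<Rightarrow> 'f trm \<Rightarrow> bool" where
  "wf_trm ar (Var v) = True"
| "wf_trm ar (Op f ts) = (length ts = ar f \<and> (\<forall>t\<in>set ts. wf_trm ar t))"

fun vars :: "'f trm \<Rightarrow> nat set" where
  "vars (Var v) = {v}"
| "vars (Op f ts) = (\<Union>t\<in>set ts. vars t)"

fun subst :: "(nat \<Rightarrow> 'f trm) \<Rightarrow> 'f trm \<Rightarrow> 'f trm" where
  "subst \<sigma> (Var v) = \<sigma> v"
| "subst \<sigma> (Op f ts) = Op f (map (subst \<sigma>) ts)"

fun eval :: "('f \<Rightarrow> 'a list \<Rightarrow> 'a) \<Rightarrow> (nat \<Rightarrow> 'a) \<Rightarrow> 'f trm \<Rightarrow> 'a" where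
  "eval I \<rho> (Var v) = \<rho> v"
| "eval I \<rho> (Op f ts) = I f (map (eval I \<rho>) ts)"

definition wf_ids :: "('f \<Rightarrow> nat) \<Rightarrow> ('f trm \<times> 'f trm) set \<Rightarrow> bool" where
  "wf_ids ar \<Sigma> \<longleftrightarrow> (\<forall>(s, t)\<in>\<Sigma>. wf_trm ar s \<and> wf_trm ar t)"

text \<open>Identities of the variety defined by \<Sigma>: equational consequences of \<Sigma>
  (Birkhoff's equational logic; by completeness exactly the identities true in all
  algebras of the variety).\<close>
inductive deriv :: "('f \<Rightarrow> nat) \<Rightarrow> ('f trm \<times> 'f trm) set \<Rightarrow> 'f trm \<Rightarrow> 'f trm \<Rightarrow> bool"
  for ar \<Sigma> where
  ax: "(s, t) \<in> \<Sigma> \<Longrightarrow> (\<forall>v. wf_trm ar (\<sigma> v)) \<Longrightarrow> deriv ar \<Sigma> (subst \<sigma> s) (subst \<sigma> t)"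
| refl: "wf_trm ar t \<Longrightarrow> deriv ar \<Sigma> t t"
| sym: "deriv ar \<Sigma> s t \<Longrightarrow> deriv ar \<Sigma> t s"
| trans: "deriv ar \<Sigma> s t \<Longrightarrow> deriv ar \<Sigma> t u \<Longrightarrow> deriv ar \<Sigma> s u"
| cong: "length ss = ar f \<Longrightarrow> length ts = ar f \<Longrightarrow>
         (\<forall>i<ar f. deriv ar \<Sigma> (ss ! i) (ts ! i)) \<Longrightarrow> deriv ar \<Sigma> (Op f ss) (Op f ts)"

definition algebra :: "('f \<Rightarrow> nat) \<Rightarrow> 'a set \<Rightarrow> ('f \<Rightarrow> 'a list \<Rightarrow> 'a) \<Rightarrow> bool" where
  "algebra ar A I \<longleftrightarrow> (\<forall>f xs. length xs = ar f \<longrightarrow> set xs \<subseteq> A \<longrightarrow> I f xs \<in> A)"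

definition in_variety :: "('f \<Rightarrow> nat) \<Rightarrow> ('f trm \<times> 'f trm) set \<Rightarrow> 'a set \<Rightarrow> ('f \<Rightarrow> 'a list \<Rightarrow> 'a) \<Rightarrow> bool" where
  "in_variety ar \<Sigma> A I \<longleftrightarrow> algebra ar A I \<and>
     (\<forall>(s, t)\<in>\<Sigma>. \<forall>\<rho>. range \<rho> \<subseteq> A \<longrightarrow> eval I \<rho> s = eval I \<rho> t)"

text \<open>BIT speciale with constant z (a closed term). x = Var 0, y = Var 1;
  \<theta> has variables among 0..n, where variable i<n receives \<alpha>_(i+1)(x,y) and n receives y.\<close>
definition bit_speciale :: "('f \<Rightarrow> nat) \<Rightarrow> ('f trm \<times> 'f trm) set \<Rightarrow> 'f trm \<Rightarrow> bool" where
  "bit_speciale ar \<Sigma> z \<longleftrightarrow> wf_trm ar z \<and> vars z = {} \<and>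
     (\<exists>n \<alpha>s \<theta>. n \<ge> 1 \<and> length \<alpha>s = n \<and>
        (\<forall>\<alpha>\<in>set \<alpha>s. wf_trm ar \<alpha> \<and> vars \<alpha> \<subseteq> {0, 1}) \<and>
        wf_trm ar \<theta> \<and> vars \<theta> \<subseteq> {0..n} \<and>
        (\<forall>\<alpha>\<in>set \<alpha>s. deriv ar \<Sigma> (subst (\<lambda>v. Var 0) \<alpha>) z) \<and>
        deriv ar \<Sigma> (subst (\<lambda>v. if v < n then \<alpha>s ! v else Var 1) \<theta>) (Var 0))"

text \<open>Ideal terms of the variety defined by \<Sigma> (w.r.t. the constant z) in the
  variables Y (the y's); all other variables are the x's.\<close>
definition ideal_term :: "('f \<Rightarrow> nat) \<Rightarrow> ('f trm \<times> 'f trm) set \<Rightarrow> 'f trm \<Rightarrow> nat set \<Rightarrow> 'f trm \<Rightarrow> bool" where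
  "ideal_term ar \<Sigma> z Y t \<longleftrightarrow> wf_trm ar t \<and> finite Y \<and>
     deriv ar \<Sigma> (subst (\<lambda>v. if v \<in> Y then z else Var v) t) z"

definition is_ideal :: "('f \<Rightarrow> nat) \<Rightarrow> ('f trm \<times> 'f trm) set \<Rightarrow> 'f trm \<Rightarrow> 'a set \<Rightarrow> ('f \<Rightarrow> 'a list \<Rightarrow> 'a) \<Rightarrow> 'a set \<Rightarrow> bool" where
  "is_ideal ar \<Sigma> z A I H \<longleftrightarrow> H \<noteq> {} \<and> H \<subseteq> A \<and>
     (\<forall>Y t \<rho>. ideal_term ar \<Sigma> z Y t \<longrightarrow> (\<forall>v. \<rho> v \<in> A) \<longrightarrow> (\<forall>v\<in>Y. \<rho> v \<in> H) \<longrightarrow>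
        eval I \<rho> t \<in> H)"

end

theory Submission
  imports Defs
begin

text \<open>Every ideal term of \<open>\<Sigma>\<close> is one of \<open>\<Sigma>'\<close>, so \<open>\<Sigma>'\<close>-ideals are \<open>\<Sigma>\<close>-ideals.
  Conversely, let \<open>t\<close> be an ideal term of \<open>\<Sigma>'\<close> and \<open>t\<^sub>0\<close> the term obtained by putting \<open>0\<close> for
  its ideal variables. Each \<open>\<alpha>\<^sub>i(t, t\<^sub>0)\<close> is an ideal term of \<open>\<Sigma>\<close> already, since it becomes
  \<open>\<alpha>\<^sub>i(t\<^sub>0, t\<^sub>0) = 0\<close>, and \<open>\<theta>\<close> is an ideal term of \<open>\<Sigma>\<close> in all its variables. In a
  \<open>\<Sigma>'\<close>-algebra \<open>t\<^sub>0\<close> evaluates to \<open>0\<close>, hence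
  \<open>t = \<theta>(\<alpha>\<^sub>1(t, t\<^sub>0), \<dots>, \<alpha>\<^sub>n(t, t\<^sub>0), t\<^sub>0)\<close> lies in every \<open>\<Sigma>\<close>-ideal.\<close>

lemma subst_subst: "subst \<tau> (subst \<sigma> t) = subst (\<lambda>v. subst \<tau> (\<sigma> v)) t"
  by (induction t) auto

lemma subst_vars_cong: "(\<And>v. v \<in> vars t \<Longrightarrow> \<sigma> v = \<sigma>' v) \<Longrightarrow> subst \<sigma> t = subst \<sigma>' t"
  by (induction t) auto

lemma subst_Var: "subst Var t = t"
  by (induction t) (auto simp: map_idI)

lemma subst_ground: "vars t = {} \<Longrightarrow> subst \<sigma> t = t"
  by (metis empty_iff subst_Var subst_vars_cong)

lemma wf_subst: "wf_trm ar t \<Longrightarrow> (\<And>v. wf_trm ar (\<sigma> v)) \<Longrightarrow> wf_trm ar (subst \<sigma> t)"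
  by (induction t) auto

lemma eval_subst: "eval I \<rho> (subst \<sigma> t) = eval I (\<lambda>v. eval I \<rho> (\<sigma> v)) t"
  by (induction t) (simp_all cong: map_cong)

lemma eval_in_carrier:
  assumes "algebra ar A I" and "wf_trm ar t" and "\<And>v. \<rho> v \<in> A"
  shows "eval I \<rho> t \<in> A"
  using assms(2)
proof (induction t)
  case (Op f ts)
  then have "set (map (eval I \<rho>) ts) \<subseteq> A" by auto
  with Op.prems assms(1) show ?case unfolding algebra_def by auto
qed (simp add: assms(3))

lemma in_variety_mono: "\<Sigma> \<subseteq> \<Sigma>' \<Longrightarrow> in_variety ar \<Sigma>' A I \<Longrightarrow> in_variety ar \<Sigma> A I"
  unfolding in_variety_def by blast

lemma deriv_mono: "deriv ar \<Sigma> s t \<Longrightarrow> \<Sigma> \<subseteq> \<Sigma>' \<Longrightarrow> deriv ar \<Sigma>' s t"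
  by (induction rule: deriv.induct) (auto intro: deriv.intros)

lemma deriv_subst:
  "deriv ar \<Sigma> s t \<Longrightarrow> (\<And>v. wf_trm ar (\<sigma> v)) \<Longrightarrow> deriv ar \<Sigma> (subst \<sigma> s) (subst \<sigma> t)"
proof (induction rule: deriv.induct)
  case (ax s t \<tau>)
  then have "deriv ar \<Sigma> (subst (\<lambda>v. subst \<sigma> (\<tau> v)) s) (subst (\<lambda>v. subst \<sigma> (\<tau> v)) t)"
    by (intro deriv.ax) (auto intro: wf_subst)
  then show ?case by (simp add: subst_subst)
next
  case (cong ss f ts)
  then have "deriv ar \<Sigma> (Op f (map (subst \<sigma>) ss)) (Op f (map (subst \<sigma>) ts))"
    by (intro deriv.cong) auto
  then show ?case by simp
qed (auto intro: deriv.intros wf_subst)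

lemma deriv_subst_cong:
  "wf_trm ar t \<Longrightarrow> (\<And>v. deriv ar \<Sigma> (\<sigma> v) (\<sigma>' v)) \<Longrightarrow> deriv ar \<Sigma> (subst \<sigma> t) (subst \<sigma>' t)"
  by (induction t) (auto intro!: deriv.cong)

lemma deriv_sound:
  assumes "deriv ar \<Sigma> s t" and "in_variety ar \<Sigma> A I" and "\<And>v. \<rho> v \<in> A"
  shows "eval I \<rho> s = eval I \<rho> t"
  using assms(1,3)
proof (induction arbitrary: \<rho> rule: deriv.induct)
  case (ax s t \<sigma>)
  have "algebra ar A I" using assms(2) unfolding in_variety_def by blast
  with ax have "range (\<lambda>v. eval I \<rho> (\<sigma> v)) \<subseteq> A" by (auto intro: eval_in_carrier)
  with ax assms(2) show ?case unfolding in_variety_def by (auto simp: eval_subst)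
next
  case (cong ss f ts)
  then have "map (eval I \<rho>) ss = map (eval I \<rho>) ts" by (intro nth_equalityI) auto
  then show ?case by simp
qed simp_all

abbreviation zero_at :: "'f trm \<Rightarrow> nat set \<Rightarrow> nat \<Rightarrow> 'f trm" where
  "zero_at z Y \<equiv> \<lambda>v. if v \<in> Y then z else Var v"

lemma subst_zero_at_idem:
  "vars z = {} \<Longrightarrow> subst (zero_at z Y) (subst (zero_at z Y) t) = subst (zero_at z Y) t"
  by (simp add: subst_subst subst_ground if_distrib cong: if_cong)

lemma ideal_term_mono: "ideal_term ar \<Sigma> z Y t \<Longrightarrow> \<Sigma> \<subseteq> \<Sigma>' \<Longrightarrow> ideal_term ar \<Sigma>' z Y t"
  unfolding ideal_term_def by (blast intro: deriv_mono)

lemma is_ideal_antimono: "is_ideal ar \<Sigma>' z A I H \<Longrightarrow> \<Sigma> \<subseteq> \<Sigma>' \<Longrightarrow> is_ideal ar \<Sigma> z A I H"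
  unfolding is_ideal_def by (blast intro: ideal_term_mono)

lemma is_idealD:
  "is_ideal ar \<Sigma> z A I H \<Longrightarrow> ideal_term ar \<Sigma> z Y t \<Longrightarrow> (\<And>v. \<rho> v \<in> A) \<Longrightarrow>
    (\<And>v. v \<in> Y \<Longrightarrow> \<rho> v \<in> H) \<Longrightarrow> eval I \<rho> t \<in> H"
  unfolding is_ideal_def by blast

lemma is_ideal_zero:
  assumes "is_ideal ar \<Sigma> z A I H" and "wf_trm ar z" and "vars z = {}" and "\<And>v. \<rho> v \<in> A"
  shows "eval I \<rho> z \<in> H"
proof -
  have "ideal_term ar \<Sigma> z {} z"
    unfolding ideal_term_def using assms(2,3) by (simp add: subst_ground deriv.refl)
  then show ?thesis using assms(1,4) by (auto intro: is_idealD)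
qed

text \<open>The data witnessing that \<open>\<Sigma>\<close> is BIT speciale, without the side conditions
  \<open>n \<ge> 1\<close> and \<open>vars \<alpha> \<subseteq> {0, 1}\<close>, which the argument does not need.\<close>

locale bit_speciale_terms =
  fixes ar :: "'f \<Rightarrow> nat" and \<Sigma> :: "('f trm \<times> 'f trm) set" and z :: "'f trm"
    and n :: nat and \<alpha>s :: "'f trm list" and \<theta> :: "'f trm"
  assumes wf_zero: "wf_trm ar z" and vars_zero: "vars z = {}"
    and length_alphas: "length \<alpha>s = n"
    and wf_alphas: "\<And>\<alpha>. \<alpha> \<in> set \<alpha>s \<Longrightarrow> wf_trm ar \<alpha>"
    and wf_theta: "wf_trm ar \<theta>" and vars_theta: "vars \<theta> \<subseteq> {0..n}"
    and alpha_diag: "\<And>\<alpha>. \<alpha> \<in> set \<alpha>s \<Longrightarrow> deriv ar \<Sigma> (subst (\<lambda>v. Var 0) \<alpha>) z"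
    and theta_alphas: "deriv ar \<Sigma> (subst (\<lambda>v. if v < n then \<alpha>s ! v else Var 1) \<theta>) (Var 0)"

lemma bit_speciale_terms_exists:
  "bit_speciale ar \<Sigma> z \<Longrightarrow> \<exists>n \<alpha>s \<theta>. bit_speciale_terms ar \<Sigma> z n \<alpha>s \<theta>"
  unfolding bit_speciale_def bit_speciale_terms_def by blast

context bit_speciale_terms
begin

lemma alpha_const: "\<alpha> \<in> set \<alpha>s \<Longrightarrow> wf_trm ar s \<Longrightarrow> deriv ar \<Sigma> (subst (\<lambda>v. s) \<alpha>) z"
  using deriv_subst[OF alpha_diag, of \<alpha> "\<lambda>v. s"] by (simp add: subst_subst subst_ground vars_zero)

lemma theta_ideal_term: "ideal_term ar \<Sigma> z {0..n} \<theta>"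
proof -
  have "deriv ar \<Sigma> (subst (\<lambda>v. z) (subst (\<lambda>v. if v < n then \<alpha>s ! v else Var 1) \<theta>)) z"
    using deriv_subst[OF theta_alphas, of "\<lambda>v. z"] wf_zero by simp
  then have theta_alphas_zero:
    "deriv ar \<Sigma> (subst (\<lambda>v. if v < n then subst (\<lambda>v. z) (\<alpha>s ! v) else z) \<theta>) z"
    by (simp add: subst_subst if_distrib cong: if_cong)
  have "deriv ar \<Sigma> (if v < n then subst (\<lambda>v. z) (\<alpha>s ! v) else z) z" for v
    using alpha_const length_alphas wf_zero by (auto intro: deriv.refl)
  with wf_theta have "deriv ar \<Sigma> (subst (\<lambda>v. if v < n then subst (\<lambda>v. z) (\<alpha>s ! v) else z) \<theta>)
      (subst (\<lambda>v. z) \<theta>)"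
    by (rule deriv_subst_cong)
  with theta_alphas_zero have "deriv ar \<Sigma> (subst (\<lambda>v. z) \<theta>) z"
    by (blast intro: deriv.sym deriv.trans)
  moreover have "subst (zero_at z {0..n}) \<theta> = subst (\<lambda>v. z) \<theta>"
    using vars_theta by (intro subst_vars_cong) auto
  ultimately show ?thesis unfolding ideal_term_def using wf_theta by simp
qed

text \<open>\<open>\<alpha>(t, t\<^sub>0)\<close> becomes \<open>\<alpha>(t\<^sub>0, t\<^sub>0)\<close> when the variables \<open>Y\<close> are put to \<open>0\<close>,
  because \<open>t\<^sub>0\<close> is unchanged by that substitution.\<close>

lemma alpha_ideal_term:
  assumes "\<alpha> \<in> set \<alpha>s" and "wf_trm ar t" and "finite Y"
  defines "t\<^sub>0 \<equiv> subst (zero_at z Y) t"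
  shows "ideal_term ar \<Sigma> z Y (subst (\<lambda>w. if w = 0 then t else t\<^sub>0) \<alpha>)"
proof -
  have wf_t0: "wf_trm ar t\<^sub>0"
    unfolding t\<^sub>0_def using assms(2) wf_zero by (auto intro: wf_subst)
  have "subst (zero_at z Y) (subst (\<lambda>w. if w = 0 then t else t\<^sub>0) \<alpha>) = subst (\<lambda>w. t\<^sub>0) \<alpha>"
    unfolding subst_subst t\<^sub>0_def
    by (rule subst_vars_cong) (simp add: subst_zero_at_idem[OF vars_zero])
  moreover have "deriv ar \<Sigma> (subst (\<lambda>w. t\<^sub>0) \<alpha>) z"
    using assms(1) wf_t0 by (rule alpha_const)
  moreover have "wf_trm ar (subst (\<lambda>w. if w = 0 then t else t\<^sub>0) \<alpha>)"
    using wf_alphas[OF assms(1)] assms(2) wf_t0 by (intro wf_subst) auto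
  ultimately show ?thesis unfolding ideal_term_def using assms(3) by simp
qed

lemma eval_theta_alphas:
  assumes "in_variety ar \<Sigma> A I" and "wf_trm ar t" and "wf_trm ar s" and "\<And>v. \<rho> v \<in> A"
  shows "eval I \<rho> t = eval I (\<lambda>v. if v < n
           then eval I \<rho> (subst (\<lambda>w. if w = 0 then t else s) (\<alpha>s ! v)) else eval I \<rho> s) \<theta>"
proof -
  let ?\<sigma> = "\<lambda>w. if w = 0 then t else s"
  have "deriv ar \<Sigma> (subst ?\<sigma> (subst (\<lambda>v. if v < n then \<alpha>s ! v else Var 1) \<theta>)) t"
    using deriv_subst[OF theta_alphas, of ?\<sigma>] assms(2,3) by simp
  then have "eval I \<rho> t = eval I \<rho> (subst ?\<sigma> (subst (\<lambda>v. if v < n then \<alpha>s ! v else Var 1) \<theta>))"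
    using deriv_sound[OF _ assms(1,4)] by simp
  then show ?thesis
    by (simp add: eval_subst subst_subst if_distrib cong: if_cong)
qed

lemma is_ideal_extend:
  assumes "\<Sigma> \<subseteq> \<Sigma>'" and "in_variety ar \<Sigma>' A I" and ideal: "is_ideal ar \<Sigma> z A I H"
  shows "is_ideal ar \<Sigma>' z A I H"
  unfolding is_ideal_def
proof (intro conjI allI impI)
  show "H \<noteq> {}" "H \<subseteq> A" using ideal unfolding is_ideal_def by auto
  fix Y t \<rho>
  assume "ideal_term ar \<Sigma>' z Y t" and \<rho>_A: "\<forall>v. \<rho> v \<in> A" and \<rho>_H: "\<forall>v\<in>Y. \<rho> v \<in> H"
  then have wf_t: "wf_trm ar t" and "finite Y" and t0_zero: "deriv ar \<Sigma>' (subst (zero_at z Y) t) z"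
    unfolding ideal_term_def by auto
  define t\<^sub>0 where "t\<^sub>0 = subst (zero_at z Y) t"
  have wf_t0: "wf_trm ar t\<^sub>0" unfolding t\<^sub>0_def using wf_t wf_zero by (auto intro: wf_subst)
  have "eval I \<rho> t\<^sub>0 \<in> H"
    using deriv_sound[OF t0_zero assms(2)] \<rho>_A is_ideal_zero[OF ideal wf_zero vars_zero]
    by (simp add: t\<^sub>0_def)
  moreover have "eval I \<rho> (subst (\<lambda>w. if w = 0 then t else t\<^sub>0) (\<alpha>s ! v)) \<in> H" if "v < n" for v
  proof -
    have "ideal_term ar \<Sigma> z Y (subst (\<lambda>w. if w = 0 then t else t\<^sub>0) (\<alpha>s ! v))"
      unfolding t\<^sub>0_def using that length_alphas wf_t \<open>finite Y\<close> by (intro alpha_ideal_term) auto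
    then show ?thesis using ideal \<rho>_A \<rho>_H by (auto intro: is_idealD)
  qed
  ultimately have "eval I (\<lambda>v. if v < n
      then eval I \<rho> (subst (\<lambda>w. if w = 0 then t else t\<^sub>0) (\<alpha>s ! v)) else eval I \<rho> t\<^sub>0) \<theta> \<in> H"
    using ideal theta_ideal_term \<open>H \<subseteq> A\<close> by (auto intro!: is_idealD)
  then show "eval I \<rho> t \<in> H"
    using eval_theta_alphas[OF in_variety_mono[OF assms(1,2)] wf_t wf_t0] \<rho>_A by simp
qed

end

theorem corollary2p8:
  fixes ar :: "'f \<Rightarrow> nat"
    and \<Sigma> \<Sigma>' :: "('f trm \<times> 'f trm) set"
    and z :: "'f trm"
    and A :: "'a set" and I :: "'f \<Rightarrow> 'a list \<Rightarrow> 'a" and H :: "'a set"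
  assumes "wf_ids ar \<Sigma>'"
    and "\<Sigma> \<subseteq> \<Sigma>'"
    and "bit_speciale ar \<Sigma> z"
    and "in_variety ar \<Sigma>' A I"
    and "H \<subseteq> A"
  shows "is_ideal ar \<Sigma>' z A I H \<longleftrightarrow> is_ideal ar \<Sigma> z A I H"
proof
  assume "is_ideal ar \<Sigma>' z A I H"
  then show "is_ideal ar \<Sigma> z A I H" using assms(2) by (rule is_ideal_antimono)
next
  assume "is_ideal ar \<Sigma> z A I H"
  moreover obtain n \<alpha>s \<theta> where "bit_speciale_terms ar \<Sigma> z n \<alpha>s \<theta>"
    using bit_speciale_terms_exists[OF assms(3)] by blast
  ultimately show "is_ideal ar \<Sigma>' z A I H"
    using bit_speciale_terms.is_ideal_extend assms(2,4) by blast
qed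

end
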